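(* The inequality $\frac{\sin x}{x}>M(\cos x;q)$ holds for all $x\in(0,\pi/2)$ if and only if $q\le\frac{34}{35}$, while the reverse inequality $\frac{\sin x}{x}<M(\cos x;q)$ holds for all $x\in(0,\pi/2)$ if and only if $q\ge q_0\approx0.989681$, where $q_0$ is the unique positive root of $\delta(q)=0$.
   Context: For $t\in(0,1)$ and $q\in\mathbb{R}$: $M(t;q)=\left(\frac{8}{15q}+\left(1-\frac{8}{15q}\right)t^q\right)^{5/(15q-8)}$ if $q\ne0,\frac8{15}$; $M(t;0)=\left(1-\frac8{15}\ln t\right)^{-5/8}$; $M(t;\frac8{15})=\exp\frac{5(t^{8/15}-1)}{8}$. For $q>0$ define $\delta(q)=\frac{1-(2/\pi)^{3q-8/5}}{3q-8/5}-\frac1{3q}$ if $q\ne\frac8{15}$ and $\delta(\frac8{15})=\ln\frac\pi2-\frac58$. *)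

theory Defs
  imports "HOL-Analysis.Analysis"
begin

definition M :: "real \<Rightarrow> real \<Rightarrow> real" where
  "M t q =
    (if q = 0 then (1 - 8/15 * ln t) powr (-5/8)
     else if q = 8/15 then exp (5 * (t powr (8/15) - 1) / 8)
     else (8/(15*q) + (1 - 8/(15*q)) * t powr q) powr (5 / (15*q - 8)))"

definition delta :: "real \<Rightarrow> real" where
  "delta q =
    (if q = 8/15 then ln (pi/2) - 5/8
     else (1 - (2/pi) powr (3*q - 8/5)) / (3*q - 8/5) - 1/(3*q))"

end

theory Submission
  imports Defs "HOL-Real_Asymp.Real_Asymp"
begin

(* With the generalized logarithm L_r u = (u^r - 1)/r (ln u for r = 0), M t q is the solution m of
   L_(3q-8/5) m = L_q t / 3, so sin x / x - M (cos x) q has the sign of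
   gap q x = 3 L_(3q-8/5) (sin x / x) - L_q (cos x).  This tends to 0 at 0 and to -3 delta q at pi/2,
   and its derivative has the sign of gap_log q x, the logarithm of the ratio of its two terms.
   In turn gap_log q tends to 0 at 0 and its derivative has the sign of crit_ratio x - q, where
   crit_ratio increases from 34/35 on (0, pi/2).  So for q <= 34/35 both functions are positive, while
   for q > 34/35 gap q starts negative and, since gap_log q changes sign at most once, stays negative
   exactly when its limit -3 delta q at pi/2 is not positive.  The monotonicity of crit_ratio rests on
   the positivity of two trigonometric polynomials on (0, 8/5], checked with Maclaurin polynomials and
   explicit remainder bounds.  Finally delta q has the sign of q - q0, which is read off from the
   convex function ln (8/15) - ln q + (3q - 8/5) ln (pi/2). *)

lemma DERIV_pos_on_open_imp_less:
  fixes f :: "real \<Rightarrow> real"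
  assumes "x < y"
    and der: "\<And>t. x \<le> t \<Longrightarrow> t \<le> y \<Longrightarrow> (f has_real_derivative f' t) (at t)"
    and pos: "\<And>t. x < t \<Longrightarrow> t < y \<Longrightarrow> 0 < f' t"
  shows "f x < f y"
proof (rule DERIV_pos_imp_increasing_open[OF \<open>x < y\<close>])
  fix t assume "x < t" "t < y"
  then show "\<exists>d. (f has_real_derivative d) (at t) \<and> 0 < d"
    using der pos by (intro exI[of _ "f' t"]) auto
next
  show "continuous_on {x..y} f"
    by (rule DERIV_atLeastAtMost_imp_continuous_on) (use der in blast)
qed

lemma DERIV_neg_on_open_imp_greater:
  fixes f :: "real \<Rightarrow> real"
  assumes "x < y"
    and der: "\<And>t. x \<le> t \<Longrightarrow> t \<le> y \<Longrightarrow> (f has_real_derivative f' t) (at t)"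
    and neg: "\<And>t. x < t \<Longrightarrow> t < y \<Longrightarrow> f' t < 0"
  shows "f y < f x"
  using DERIV_pos_on_open_imp_less[of x y "\<lambda>t. - f t" "\<lambda>t. - f' t"] assms
  by (auto intro: DERIV_minus)

lemma DERIV_pos_imp_gt_right_limit:
  fixes f :: "real \<Rightarrow> real"
  assumes lim: "(f \<longlongrightarrow> L) (at_right a)" and "a < x"
    and der: "\<And>t. a < t \<Longrightarrow> t \<le> x \<Longrightarrow> (f has_real_derivative f' t) (at t)"
    and pos: "\<And>t. a < t \<Longrightarrow> t < x \<Longrightarrow> 0 < f' t"
  shows "L < f x"
proof -
  define m where "m = (a + x) / 2"
  have m: "a < m" "m < x" using \<open>a < x\<close> by (simp_all add: m_def)
  have less: "f s < f t" if "a < s" "s < t" "t \<le> x" for s t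
    using that by (intro DERIV_pos_on_open_imp_less[of s t f f'] der pos) auto
  have "L \<le> f m"
  proof (rule tendsto_le[OF _ tendsto_const lim])
    show "\<forall>\<^sub>F t in at_right a. f t \<le> f m"
      unfolding eventually_at_right_field using m less by (intro exI[of _ m]) (auto intro: less_imp_le)
  qed simp
  also have "f m < f x" using m less by auto
  finally show ?thesis .
qed

lemma DERIV_neg_imp_lt_right_limit:
  fixes f :: "real \<Rightarrow> real"
  assumes "(f \<longlongrightarrow> L) (at_right a)" and "a < x"
    and "\<And>t. a < t \<Longrightarrow> t \<le> x \<Longrightarrow> (f has_real_derivative f' t) (at t)"
    and "\<And>t. a < t \<Longrightarrow> t < x \<Longrightarrow> f' t < 0"
  shows "f x < L"
  using DERIV_pos_imp_gt_right_limit[of "\<lambda>t. - f t" "- L" a x "\<lambda>t. - f' t"] assms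
  by (auto intro: DERIV_minus tendsto_minus)

lemma DERIV_pos_imp_lt_left_limit:
  fixes f :: "real \<Rightarrow> real"
  assumes lim: "(f \<longlongrightarrow> L) (at_left b)" and "x < b"
    and der: "\<And>t. x \<le> t \<Longrightarrow> t < b \<Longrightarrow> (f has_real_derivative f' t) (at t)"
    and pos: "\<And>t. x < t \<Longrightarrow> t < b \<Longrightarrow> 0 < f' t"
  shows "f x < L"
proof -
  define m where "m = (x + b) / 2"
  have m: "x < m" "m < b" using \<open>x < b\<close> by (simp_all add: m_def)
  have less: "f s < f t" if "x \<le> s" "s < t" "t < b" for s t
    using that by (intro DERIV_pos_on_open_imp_less[of s t f f'] der pos) auto
  have "f x < f m" using m less by auto
  also have "f m \<le> L"
  proof (rule tendsto_le[OF _ lim tendsto_const])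
    show "\<forall>\<^sub>F t in at_left b. f m \<le> f t"
      unfolding eventually_at_left_field using m less by (intro exI[of _ m]) (auto intro: less_imp_le)
  qed simp
  finally show ?thesis .
qed


section \<open>Trigonometric expressions and their Maclaurin bounds\<close>

datatype trig = Sin | Cos

fun trig_fun :: "trig \<Rightarrow> real \<Rightarrow> real" where
  "trig_fun Sin = sin"
| "trig_fun Cos = cos"

fun trig_coeff :: "trig \<Rightarrow> nat \<Rightarrow> real" where
  "trig_coeff Sin = sin_coeff"
| "trig_coeff Cos = cos_coeff"

lemma Maclaurin_cos_bound: "\<bar>cos x - (\<Sum>m<n. cos_coeff m * x ^ m)\<bar> \<le> \<bar>x\<bar> ^ n / fact n"
proof -
  obtain t where "cos x = (\<Sum>m<n. cos_coeff m * x ^ m) + cos (t + 1/2 * real n * pi) / fact n * x ^ n"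
    using Maclaurin_cos_expansion by blast
  then have "\<bar>cos x - (\<Sum>m<n. cos_coeff m * x ^ m)\<bar> = \<bar>cos (t + 1/2 * real n * pi)\<bar> / fact n * \<bar>x\<bar> ^ n"
    by (simp add: abs_mult power_abs)
  also have "\<dots> \<le> 1 / fact n * \<bar>x\<bar> ^ n"
    by (intro mult_right_mono divide_right_mono) auto
  finally show ?thesis by simp
qed

lemma Maclaurin_trig_bound:
  "\<bar>trig_fun f x - (\<Sum>m<n. trig_coeff f m * x ^ m)\<bar> \<le> \<bar>x\<bar> ^ n / fact n"
  using Maclaurin_sin_bound[of x n] Maclaurin_cos_bound[of x n]
  by (cases f) (simp_all add: divide_inverse mult.commute)

text \<open>The term \<open>(a, k, f, j)\<close> stands for \<open>a * x ^ k * f (j * x)\<close>. For a sum of such terms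
  the simplifier can compute the Maclaurin coefficients and an explicit bound on the remainder.\<close>

type_synonym trig_term = "real \<times> nat \<times> trig \<times> nat"

fun term_val :: "trig_term \<Rightarrow> real \<Rightarrow> real" where
  "term_val (a, k, f, j) x = a * x ^ k * trig_fun f (real j * x)"

fun term_coeff :: "trig_term \<Rightarrow> nat \<Rightarrow> real" where
  "term_coeff (a, k, f, j) n = (if k \<le> n then a * trig_coeff f (n - k) * real j ^ (n - k) else 0)"

fun term_err :: "trig_term \<Rightarrow> nat \<Rightarrow> real" where
  "term_err (a, k, f, j) n = \<bar>a\<bar> * real j ^ (n - k) / fact (n - k)"

(* k - 1 is truncated at k = 0, where the coefficient real k * a vanishes anyway *)
fun term_deriv :: "trig_term \<Rightarrow> trig_term list" where
  "term_deriv (a, k, Sin, j) = [(real k * a, k - 1, Sin, j), (a * real j, k, Cos, j)]"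
| "term_deriv (a, k, Cos, j) = [(real k * a, k - 1, Cos, j), (- a * real j, k, Sin, j)]"

definition texpr :: "trig_term list \<Rightarrow> real \<Rightarrow> real" where
  "texpr ts x = (\<Sum>t\<leftarrow>ts. term_val t x)"

definition texpr_coeff :: "trig_term list \<Rightarrow> nat \<Rightarrow> real" where
  "texpr_coeff ts n = (\<Sum>t\<leftarrow>ts. term_coeff t n)"

definition texpr_err :: "trig_term list \<Rightarrow> nat \<Rightarrow> real" where
  "texpr_err ts n = (\<Sum>t\<leftarrow>ts. term_err t n)"

definition texpr_deriv :: "trig_term list \<Rightarrow> trig_term list" where
  "texpr_deriv ts = concat (map term_deriv ts)"

lemma term_Maclaurin_bound:
  assumes "0 \<le> x" "k \<le> n"
  shows "\<bar>term_val (a, k, f, j) x - (\<Sum>i<n. term_coeff (a, k, f, j) i * x ^ i)\<bar>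
           \<le> term_err (a, k, f, j) n * x ^ n"
proof -
  let ?p = "\<Sum>m<n-k. trig_coeff f m * (real j * x) ^ m"
  have "(\<Sum>i<n. term_coeff (a, k, f, j) i * x ^ i)
        = (\<Sum>i\<in>{k..<n}. a * trig_coeff f (i - k) * real j ^ (i - k) * x ^ i)"
    by (rule sum.mono_neutral_cong_right) auto
  also have "\<dots> = (\<Sum>m<n-k. a * trig_coeff f m * real j ^ m * x ^ (m + k))"
    by (rule sum.reindex_bij_witness[where i="\<lambda>m. m + k" and j="\<lambda>i. i - k"]) (use assms in auto)
  also have "\<dots> = a * x ^ k * ?p"
    by (simp add: sum_distrib_left power_mult_distrib power_add mult_ac)
  finally have poly: "(\<Sum>i<n. term_coeff (a, k, f, j) i * x ^ i) = a * x ^ k * ?p" .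
  have "\<bar>term_val (a, k, f, j) x - a * x ^ k * ?p\<bar> = \<bar>a\<bar> * x ^ k * \<bar>trig_fun f (real j * x) - ?p\<bar>"
    using assms by (simp add: abs_mult flip: right_diff_distrib)
  also have "\<dots> \<le> \<bar>a\<bar> * x ^ k * (\<bar>real j * x\<bar> ^ (n - k) / fact (n - k))"
    using assms by (intro mult_left_mono Maclaurin_trig_bound) auto
  also have "\<dots> = term_err (a, k, f, j) n * x ^ n"
    using assms by (simp add: power_mult_distrib field_simps flip: power_add)
  finally show ?thesis unfolding poly .
qed

lemma texpr_Maclaurin_bound:
  assumes "0 \<le> x" "\<forall>(a, k, f, j) \<in> set ts. k \<le> n"
  shows "\<bar>texpr ts x - (\<Sum>i<n. texpr_coeff ts i * x ^ i)\<bar> \<le> texpr_err ts n * x ^ n"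
  using assms(2)
proof (induction ts)
  case Nil
  then show ?case by (simp add: texpr_def texpr_coeff_def texpr_err_def)
next
  case (Cons t ts)
  obtain a k f j where t: "t = (a, k, f, j)" by (cases t)
  have "\<bar>term_val t x - (\<Sum>i<n. term_coeff t i * x ^ i)\<bar> \<le> term_err t n * x ^ n"
    using Cons.prems term_Maclaurin_bound[OF assms(1)] by (auto simp: t)
  with Cons show ?case
    by (auto simp: texpr_def texpr_coeff_def texpr_err_def sum.distrib distrib_right)
qed

lemma texpr_ge_Maclaurin:
  assumes "0 \<le> x" "\<forall>(a, k, f, j) \<in> set ts. k \<le> n"
  shows "(\<Sum>i<n. texpr_coeff ts i * x ^ i) - texpr_err ts n * x ^ n \<le> texpr ts x"
  using texpr_Maclaurin_bound[OF assms] by linarith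

lemma has_real_derivative_term_val:
  "((\<lambda>x. term_val t x) has_real_derivative texpr (term_deriv t) x) (at x)"
proof -
  obtain a k f j where t: "t = (a, k, f, j)" by (cases t)
  have "((\<lambda>x. a * x ^ k * trig_fun f (real j * x)) has_real_derivative texpr (term_deriv t) x) (at x)"
    by (cases f) (auto simp: t texpr_def algebra_simps intro!: derivative_eq_intros)
  then show ?thesis by (simp add: t)
qed

lemma has_real_derivative_texpr: "(texpr ts has_real_derivative texpr (texpr_deriv ts) x) (at x)"
proof (induction ts)
  case Nil
  then show ?case by (simp add: texpr_def texpr_deriv_def)
next
  case (Cons t ts)
  have "texpr (t # ts) = (\<lambda>x. term_val t x + texpr ts x)"
    by (simp add: texpr_def fun_eq_iff)
  moreover have "texpr (texpr_deriv (t # ts)) x = texpr (term_deriv t) x + texpr (texpr_deriv ts) x"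
    by (simp add: texpr_def texpr_deriv_def)
  ultimately show ?case
    using DERIV_add[OF has_real_derivative_term_val Cons.IH] by simp
qed

section \<open>The critical ratio\<close>

lemma sin_cos_multiple_angle:
  fixes x :: real
  shows
  "sin (3*x) = sin x * (4 * cos x ^ 2 - 1)" "cos (3*x) = 4 * cos x ^ 3 - 3 * cos x"
  "sin (4*x) = sin x * (8 * cos x ^ 3 - 4 * cos x)" "cos (4*x) = 8 * cos x ^ 4 - 8 * cos x ^ 2 + 1"
  "sin (6*x) = sin x * (32 * cos x ^ 5 - 32 * cos x ^ 3 + 6 * cos x)"
  "cos (6*x) = 32 * cos x ^ 6 - 48 * cos x ^ 4 + 18 * cos x ^ 2 - 1"
proof -
  have sc: "sin x ^ 2 = 1 - cos x ^ 2" using sin_cos_squared_add[of x] by linarith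
  have sin_Suc: "sin (real (Suc n) * x) = sin (real n * x) * cos x + cos (real n * x) * sin x"
    and cos_Suc: "cos (real (Suc n) * x) = cos (real n * x) * cos x - sin (real n * x) * sin x" for n
    by (simp_all add: distrib_right sin_add cos_add)
  have s2: "sin (2*x) = 2 * sin x * cos x" and c2: "cos (2*x) = 2 * cos x ^ 2 - 1"
    by (simp_all add: sin_double cos_double sc)
  show s3: "sin (3*x) = sin x * (4 * cos x ^ 2 - 1)" and c3: "cos (3*x) = 4 * cos x ^ 3 - 3 * cos x"
    using sin_Suc[of 2] cos_Suc[of 2] s2 c2 sc by (simp_all, algebra+)
  show s4: "sin (4*x) = sin x * (8 * cos x ^ 3 - 4 * cos x)" and c4: "cos (4*x) = 8 * cos x ^ 4 - 8 * cos x ^ 2 + 1"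
    using sin_Suc[of 3] cos_Suc[of 3] s3 c3 sc by (simp_all, algebra+)
  have s5: "sin (5*x) = sin x * (16 * cos x ^ 4 - 12 * cos x ^ 2 + 1)"
    and c5: "cos (5*x) = 16 * cos x ^ 5 - 20 * cos x ^ 3 + 5 * cos x"
    using sin_Suc[of 4] cos_Suc[of 4] s4 c4 sc by (simp_all, algebra+)
  show "sin (6*x) = sin x * (32 * cos x ^ 5 - 32 * cos x ^ 3 + 6 * cos x)"
    and "cos (6*x) = 32 * cos x ^ 6 - 48 * cos x ^ 4 + 18 * cos x ^ 2 - 1"
    using sin_Suc[of 5] cos_Suc[of 5] s5 c5 sc by (simp_all, algebra+)
qed

text \<open>With \<open>S x = sin x - x * cos x\<close>, the derivative of \<open>gap_log q\<close> below is
  \<open>(crit_num x - q * crit_den x) / (x * S x * sin x * cos x)\<close>.\<close>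

definition crit_den :: "real \<Rightarrow> real" where
  "crit_den x = (sin x - x * cos x) * (x * sin x ^ 2 + 3 * x * cos x ^ 2 - 3 * sin x * cos x)"

definition crit_num :: "real \<Rightarrow> real" where
  "crit_num x = - 3/5 * sin x ^ 2 * cos x + x * sin x * (sin x ^ 2 + 21/5 * cos x ^ 2)
                - x ^ 2 * cos x * (2 * sin x ^ 2 + 18/5 * cos x ^ 2)"

definition crit_ratio :: "real \<Rightarrow> real" where
  "crit_ratio x = crit_num x / crit_den x"

definition crit_den_terms :: "trig_term list" where
  "crit_den_terms = [(-3/4, 0, Cos, 1), (3/4, 0, Cos, 3), (9/4, 1, Sin, 1), (5/4, 1, Sin, 3),
    (-5/2, 2, Cos, 1), (-1/2, 2, Cos, 3)]"

definition crit_num_terms :: "trig_term list" where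
  "crit_num_terms = [(-3/20, 0, Cos, 1), (3/20, 0, Cos, 3), (9/5, 1, Sin, 1), (4/5, 1, Sin, 3),
    (-16/5, 2, Cos, 1), (-2/5, 2, Cos, 3)]"

definition crit_wronskian_terms :: "trig_term list" where
  "crit_wronskian_terms = [(-39/32, 0, Sin, 2), (3/10, 0, Sin, 4), (33/160, 0, Sin, 6),
    (81/40, 1, Cos, 0), (57/40, 1, Cos, 2), (-129/40, 1, Cos, 4), (-9/40, 1, Cos, 6),
    (-119/20, 2, Sin, 2), (-37/10, 2, Sin, 4), (-1/20, 2, Sin, 6), (3, 3, Cos, 0), (4, 3, Cos, 2),
    (2, 3, Cos, 4), (6/5, 4, Sin, 2), (3/5, 4, Sin, 4)]"

lemma crit_den_eq_texpr: "crit_den x = texpr crit_den_terms x"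
  using sin_squared_eq[of x]
  by (simp add: crit_den_def crit_den_terms_def texpr_def sin_cos_multiple_angle) algebra

lemma crit_num_eq_texpr: "crit_num x = texpr crit_num_terms x"
  by (simp add: crit_num_def crit_num_terms_def texpr_def sin_cos_multiple_angle sin_squared_eq) algebra

lemma crit_wronskian_eq_texpr:
  "texpr (texpr_deriv crit_num_terms) x * texpr crit_den_terms x
     - texpr crit_num_terms x * texpr (texpr_deriv crit_den_terms) x = texpr crit_wronskian_terms x"
  using sin_squared_eq[of x]
  by (simp add: crit_num_terms_def crit_den_terms_def crit_wronskian_terms_def texpr_def
      texpr_deriv_def sin_cos_multiple_angle sin_double cos_double) algebra

lemma crit_den_Maclaurin:
  "(\<Sum>i<16. texpr_coeff crit_den_terms i * x ^ i)
     = 4/45 * x^8 - 122/4725 * x^10 + 97/28350 * x^12 - 3613/13097700 * x^14"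
  by (simp add: crit_den_terms_def texpr_coeff_def sin_coeff_def cos_coeff_def lessThan_nat_numeral fact_numeral)

lemma crit_den_Maclaurin_err: "texpr_err crit_den_terms 16 = 39698671/929901772800"
  by (simp add: crit_den_terms_def texpr_err_def fact_numeral)

lemma crit_wronskian_Maclaurin:
  "(\<Sum>i<30. texpr_coeff crit_wronskian_terms i * x ^ i)
     = 128/826875 * x^17 - 128/1819125 * x^19 + 571264/37246584375 * x^21
       - 4352/2031631875 * x^23 + 2508416/11608518796875 * x^25
       - 707072/42036495125625 * x^27 + 41122304/39018274775605125 * x^29"
  by (simp add: crit_wronskian_terms_def texpr_coeff_def sin_coeff_def cos_coeff_def lessThan_nat_numeral fact_numeral)

lemma crit_wronskian_Maclaurin_err:
  "texpr_err crit_wronskian_terms 30 = 1557311398036466/731958448368617391796875"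
  by (simp add: crit_wronskian_terms_def texpr_err_def fact_numeral)

lemma crit_den_pos:
  assumes "0 < x" "x \<le> 8/5"
  shows "0 < crit_den x"
proof -
  define y where "y = x\<^sup>2"
  have "x\<^sup>2 \<le> (8/5)\<^sup>2" using assms by (intro power_mono) auto
  then have y: "0 \<le> y" "y \<le> 64/25" by (auto simp: y_def power_divide)
  have err: "texpr_err crit_den_terms 16 * x ^ 8 \<le> 3/1000"
  proof -
    have "x ^ 8 \<le> (8/5) ^ 8" using assms by (intro power_mono) auto
    then show ?thesis by (simp add: crit_den_Maclaurin_err power_divide)
  qed
  have "0 \<le> y\<^sup>2 * (97/28350 - 3613/13097700 * y)"
    using y by (intro mult_nonneg_nonneg) auto
  then have "0 < 4/45 - 122/4725 * y + y\<^sup>2 * (97/28350 - 3613/13097700 * y)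
            - texpr_err crit_den_terms 16 * x ^ 8"
    using y err by linarith
  then have "0 < x ^ 8 * (4/45 - 122/4725 * y + y\<^sup>2 * (97/28350 - 3613/13097700 * y)
                 - texpr_err crit_den_terms 16 * x ^ 8)"
    using assms by simp
  also have "\<dots> = (\<Sum>i<16. texpr_coeff crit_den_terms i * x ^ i) - texpr_err crit_den_terms 16 * x ^ 16"
    unfolding crit_den_Maclaurin y_def by (simp add: algebra_simps flip: power_add power_mult)
  also have "\<dots> \<le> crit_den x"
    unfolding crit_den_eq_texpr using assms by (intro texpr_ge_Maclaurin) (auto simp: crit_den_terms_def)
  finally show ?thesis .
qed

lemma crit_wronskian_pos:
  assumes "0 < x" "x \<le> 8/5"
  shows "0 < texpr crit_wronskian_terms x"
proof -
  define y where "y = x\<^sup>2"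
  have "x\<^sup>2 \<le> (8/5)\<^sup>2" using assms by (intro power_mono) auto
  then have y: "0 \<le> y" "y \<le> 64/25" by (auto simp: y_def power_divide)
  have err: "texpr_err crit_wronskian_terms 30 * x ^ 13 \<le> 1/1000000"
  proof -
    have "x ^ 13 \<le> (8/5) ^ 13" using assms by (intro power_mono) auto
    then show ?thesis by (simp add: crit_wronskian_Maclaurin_err power_divide)
  qed
  define p where "p = (128/826875 - 128/1819125 * y + 3/5 * 571264/37246584375 * y\<^sup>2)
    + y\<^sup>2 * (2/5 * 571264/37246584375 - 4352/2031631875 * y)
    + y ^ 4 * (2508416/11608518796875 - 707072/42036495125625 * y)
    + 41122304/39018274775605125 * y ^ 6"
  have "128/826875 - 128/1819125 * y + 3/5 * 571264/37246584375 * y\<^sup>2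
      = 571264/62077640625 * (y - 34125/8926)\<^sup>2 + 823904/40593774375"
    by (simp add: power2_eq_square algebra_simps)
  moreover have "0 \<le> y\<^sup>2 * (2/5 * 571264/37246584375 - 4352/2031631875 * y)"
    and "0 \<le> y ^ 4 * (2508416/11608518796875 - 707072/42036495125625 * y)"
    using y by (intro mult_nonneg_nonneg; simp)+
  moreover have "0 \<le> 571264/62077640625 * (y - 34125/8926)\<^sup>2" "0 \<le> y ^ 6"
    using y by simp_all
  ultimately have "0 < p - texpr_err crit_wronskian_terms 30 * x ^ 13"
    unfolding p_def using err by linarith
  then have "0 < x ^ 17 * (p - texpr_err crit_wronskian_terms 30 * x ^ 13)"
    using assms by simp
  also have "\<dots> = (\<Sum>i<30. texpr_coeff crit_wronskian_terms i * x ^ i)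
                    - texpr_err crit_wronskian_terms 30 * x ^ 30"
    unfolding crit_wronskian_Maclaurin p_def y_def by (simp add: algebra_simps flip: power_add power_mult)
  also have "\<dots> \<le> texpr crit_wronskian_terms x"
    using assms by (intro texpr_ge_Maclaurin) (auto simp: crit_wronskian_terms_def)
  finally show ?thesis .
qed

lemma pi_half_less: "pi/2 < 8/5"
  using pi_approx by simp

lemma has_real_derivative_crit_ratio:
  assumes "0 < x" "x \<le> 8/5"
  shows "(crit_ratio has_real_derivative texpr crit_wronskian_terms x / (crit_den x)\<^sup>2) (at x)"
proof -
  have "crit_ratio = (\<lambda>x. texpr crit_num_terms x / texpr crit_den_terms x)"
    by (simp add: fun_eq_iff crit_ratio_def crit_num_eq_texpr crit_den_eq_texpr)
  moreover have "texpr crit_den_terms x \<noteq> 0"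
    using crit_den_pos[OF assms] by (simp add: crit_den_eq_texpr)
  ultimately show ?thesis
    using DERIV_divide[OF has_real_derivative_texpr has_real_derivative_texpr, of crit_den_terms x crit_num_terms]
    by (simp add: crit_wronskian_eq_texpr crit_den_eq_texpr power2_eq_square)
qed

lemma crit_ratio_deriv_pos:
  assumes "0 < x" "x \<le> 8/5"
  shows "0 < texpr crit_wronskian_terms x / (crit_den x)\<^sup>2"
  using crit_wronskian_pos[OF assms] crit_den_pos[OF assms] by simp

lemma crit_ratio_less:
  assumes "0 < x" "x < y" "y \<le> 8/5"
  shows "crit_ratio x < crit_ratio y"
proof (rule DERIV_pos_on_open_imp_less[OF \<open>x < y\<close>])
  fix t assume "x \<le> t" "t \<le> y"
  with assms show "(crit_ratio has_real_derivative texpr crit_wronskian_terms t / (crit_den t)\<^sup>2) (at t)"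
    by (intro has_real_derivative_crit_ratio) auto
next
  fix t assume "x < t" "t < y"
  with assms show "0 < texpr crit_wronskian_terms t / (crit_den t)\<^sup>2"
    by (intro crit_ratio_deriv_pos) auto
qed

lemma crit_ratio_tendsto: "(crit_ratio \<longlongrightarrow> 34/35) (at_right 0)"
  unfolding crit_ratio_def[abs_def] crit_num_def crit_den_def by real_asymp

lemma crit_ratio_gt:
  assumes "0 < x" "x \<le> 8/5"
  shows "34/35 < crit_ratio x"
proof (rule DERIV_pos_imp_gt_right_limit[OF crit_ratio_tendsto \<open>0 < x\<close>])
  fix t assume "0 < t" "t \<le> x"
  with assms show "(crit_ratio has_real_derivative texpr crit_wronskian_terms t / (crit_den t)\<^sup>2) (at t)"
    by (intro has_real_derivative_crit_ratio) auto
next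
  fix t assume "0 < t" "t < x"
  with assms show "0 < texpr crit_wronskian_terms t / (crit_den t)\<^sup>2"
    by (intro crit_ratio_deriv_pos) auto
qed

section \<open>The logarithmic derivative gap\<close>

lemma sin_minus_x_cos_pos:
  assumes "0 < x" "x \<le> pi"
  shows "0 < sin x - x * cos x"
proof -
  have "(\<lambda>t. sin t - t * cos t) 0 < (\<lambda>t. sin t - t * cos t) x"
  proof (rule DERIV_pos_on_open_imp_less[OF \<open>0 < x\<close>])
    show "((\<lambda>t. sin t - t * cos t) has_real_derivative t * sin t) (at t)" for t
      by (rule derivative_eq_intros refl | simp)+
    show "0 < t * sin t" if "0 < t" "t < x" for t
      using that assms by (simp add: sin_gt_zero)
  qed
  then show ?thesis by simp
qed

lemma sin_cos_pos_pi_half: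
  assumes "0 < x" "x < pi/2"
  shows "0 < sin x" "0 < cos x" "0 < sin x - x * cos x"
proof -
  show "0 < sin x" using assms by (intro sin_gt_zero) auto
  show "0 < cos x" using assms by (intro cos_gt_zero) auto
  show "0 < sin x - x * cos x" using assms by (intro sin_minus_x_cos_pos) auto
qed

text \<open>\<open>gap_log q x\<close> is the logarithm of the ratio of the two terms of \<open>gap_deriv q x\<close> below,
  so it decides the sign of the derivative of \<open>gap q\<close>.\<close>

definition gap_log :: "real \<Rightarrow> real \<Rightarrow> real" where
  "gap_log q x = (q - 1) * ln (cos x) + ln (sin x) + 2 * ln x - ln 3 - ln (sin x - x * cos x)
     - (3*q - 13/5) * (ln (sin x) - ln x)"

definition gap_log_deriv :: "real \<Rightarrow> real \<Rightarrow> real" where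
  "gap_log_deriv q x = (crit_num x - q * crit_den x) / (x * (sin x - x * cos x) * sin x * cos x)"

lemma has_real_derivative_gap_log:
  assumes x: "0 < x" "x < pi/2"
  shows "(gap_log q has_real_derivative gap_log_deriv q x) (at x)"
proof -
  note s = sin_cos_pos_pi_half(1)[OF x] and c = sin_cos_pos_pi_half(2)[OF x]
    and S = sin_cos_pos_pi_half(3)[OF x]
  have "(gap_log q has_real_derivative
      (q - 1) * (- sin x / cos x) + cos x / sin x + 2 / x - x * sin x / (sin x - x * cos x)
      - (3*q - 13/5) * (cos x / sin x - 1 / x)) (at x)"
    unfolding gap_log_def[abs_def]
    by (rule derivative_eq_intros refl | use s c S x in force)+ (use s c S x in \<open>simp add: field_simps\<close>)
  also have "(q - 1) * (- sin x / cos x) + cos x / sin x + 2 / x - x * sin x / (sin x - x * cos x)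
      - (3*q - 13/5) * (cos x / sin x - 1 / x) = gap_log_deriv q x"
  proof -
    (* no relation between sin x and cos x is needed, so they are abstracted *)
    have "(q - 1) * (- s' / c') + c' / s' + 2 / x - x * s' / (s' - x * c') - (3*q - 13/5) * (c' / s' - 1 / x)
        = ((- 3/5 * s'\<^sup>2 * c' + x * s' * (s'\<^sup>2 + 21/5 * c'\<^sup>2) - x\<^sup>2 * c' * (2 * s'\<^sup>2 + 18/5 * c'\<^sup>2))
           - q * ((s' - x * c') * (x * s'\<^sup>2 + 3 * x * c'\<^sup>2 - 3 * s' * c')))
          / (x * (s' - x * c') * s' * c')"
      if "0 < s'" "0 < c'" "0 < s' - x * c'" for s' c'
      using that x by (simp add: field_simps) (simp add: algebra_simps power2_eq_square)
    from this[OF s c S] show ?thesis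
      by (simp add: gap_log_deriv_def crit_num_def crit_den_def)
  qed
  finally show ?thesis .
qed

lemma gap_log_deriv_sign:
  assumes x: "0 < x" "x < pi/2"
  shows "0 < gap_log_deriv q x \<longleftrightarrow> q < crit_ratio x"
    and "gap_log_deriv q x < 0 \<longleftrightarrow> crit_ratio x < q"
proof -
  define d where "d = x * (sin x - x * cos x) * sin x * cos x"
  have "0 < d"
    unfolding d_def using x sin_cos_pos_pi_half[OF x] by (intro mult_pos_pos) auto
  moreover have "0 < crit_den x"
    using x pi_half_less by (intro crit_den_pos) auto
  moreover have "gap_log_deriv q x = crit_den x * (crit_ratio x - q) / d"
    using \<open>0 < crit_den x\<close> by (simp add: gap_log_deriv_def d_def crit_ratio_def algebra_simps)
  ultimately show "0 < gap_log_deriv q x \<longleftrightarrow> q < crit_ratio x"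
    and "gap_log_deriv q x < 0 \<longleftrightarrow> crit_ratio x < q"
    by (simp_all add: zero_less_divide_iff divide_less_0_iff zero_less_mult_iff mult_less_0_iff)
qed

lemma gap_log_tendsto: "(gap_log q \<longlongrightarrow> 0) (at_right 0)"
  unfolding gap_log_def[abs_def] by (real_asymp simp: ln_div)

lemma gap_log_pos:
  assumes "q \<le> 34/35" "0 < x" "x < pi/2"
  shows "0 < gap_log q x"
proof (rule DERIV_pos_imp_gt_right_limit[OF gap_log_tendsto \<open>0 < x\<close>])
  fix t assume "0 < t" "t \<le> x"
  with assms show "(gap_log q has_real_derivative gap_log_deriv q t) (at t)"
    by (intro has_real_derivative_gap_log) auto
next
  fix t assume "0 < t" "t < x"
  with assms pi_half_less show "0 < gap_log_deriv q t"
    using crit_ratio_gt[of t] by (simp add: gap_log_deriv_sign)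
qed

lemma gap_log_neg:
  assumes "0 < x" "x < pi/2" "crit_ratio x \<le> q"
  shows "gap_log q x < 0"
proof (rule DERIV_neg_imp_lt_right_limit[OF gap_log_tendsto \<open>0 < x\<close>])
  fix t assume "0 < t" "t \<le> x"
  with assms show "(gap_log q has_real_derivative gap_log_deriv q t) (at t)"
    by (intro has_real_derivative_gap_log) auto
next
  fix t assume "0 < t" "t < x"
  with assms pi_half_less show "gap_log_deriv q t < 0"
    using crit_ratio_less[of t x] by (simp add: gap_log_deriv_sign)
qed

lemma gap_log_pos_after:
  assumes "0 < y" "y < z" "z < pi/2" "0 \<le> gap_log q y"
  shows "0 < gap_log q z"
proof -
  have "q < crit_ratio y"
    using assms gap_log_neg[of y q] by force
  have "gap_log q y < gap_log q z"
  proof (rule DERIV_pos_on_open_imp_less[OF \<open>y < z\<close>])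
    fix t assume "y \<le> t" "t \<le> z"
    with assms show "(gap_log q has_real_derivative gap_log_deriv q t) (at t)"
      by (intro has_real_derivative_gap_log) auto
  next
    fix t assume "y < t" "t < z"
    with assms pi_half_less \<open>q < crit_ratio y\<close> show "0 < gap_log_deriv q t"
      using crit_ratio_less[of y t] by (simp add: gap_log_deriv_sign)
  qed
  with assms show ?thesis by simp
qed

section \<open>The generalized logarithm and the mean\<close>

definition gen_ln :: "real \<Rightarrow> real \<Rightarrow> real" where
  "gen_ln r u = (if r = 0 then ln u else (u powr r - 1) / r)"

lemma has_real_derivative_gen_ln:
  assumes "0 < u"
  shows "(gen_ln r has_real_derivative u powr (r - 1)) (at u)"
proof (cases "r = 0")
  case True
  have "(ln has_real_derivative 1 / u) (at u)"
    using assms by (rule DERIV_ln_divide)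
  with True assms show ?thesis
    unfolding gen_ln_def[abs_def] by (simp add: powr_minus_divide)
next
  case False
  have "((\<lambda>u. (u powr r - 1) / r) has_real_derivative r * u powr (r - 1) / r) (at u)"
    using assms by (auto intro!: derivative_eq_intros)
  with False show ?thesis
    unfolding gen_ln_def[abs_def] by simp
qed

lemma gen_ln_less_iff:
  assumes "0 < u" "0 < v"
  shows "gen_ln r u < gen_ln r v \<longleftrightarrow> u < v"
proof -
  have less: "gen_ln r a < gen_ln r b" if "0 < a" "a < b" for a b
    using that by (intro DERIV_pos_on_open_imp_less[OF \<open>a < b\<close> has_real_derivative_gen_ln]) auto
  show ?thesis
    using less[of u v] less[of v u] assms by (cases u v rule: linorder_cases) auto
qed

lemma gen_ln_1 [simp]: "gen_ln r 1 = 0"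
  by (simp add: gen_ln_def)

lemma tendsto_gen_ln:
  assumes "(f \<longlongrightarrow> a) F" "0 < a"
  shows "((\<lambda>x. gen_ln r (f x)) \<longlongrightarrow> gen_ln r a) F"
  using isCont_tendsto_compose[OF DERIV_isCont[OF has_real_derivative_gen_ln] assms(1)] assms(2) .

lemma M_base_pos:
  fixes t q :: real
  assumes "0 < t" "t < 1" "q \<noteq> 0"
  shows "0 < 8 / (15 * q) + (1 - 8 / (15 * q)) * t powr q"
proof -
  have "0 < 8 / (15 * q) * (1 - t powr q)"
  proof (cases "0 < q")
    case True
    then show ?thesis using assms powr_less_mono2[of q t 1] by simp
  next
    case False
    with assms have "q < 0" by simp
    then have "8 / (15 * q) < 0" "1 < t powr q"
      using assms powr_less_mono2_neg[of q t 1] by (simp_all add: divide_pos_neg)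
    then show ?thesis by (intro mult_neg_neg) auto
  qed
  moreover have "0 < t powr q"
    using assms by simp
  moreover have "a + (1 - a) * T = T + a * (1 - T)" for a T :: real
    by (simp add: algebra_simps)
  ultimately show ?thesis
    by (metis add_pos_pos)
qed

lemma M_pos_gen_ln:
  assumes t: "0 < t" "t < 1"
  shows "0 < M t q" and "gen_ln (3*q - 8/5) (M t q) = gen_ln q t / 3"
proof -
  consider "q = 0" | "q = 8/15" | "q \<noteq> 0" "q \<noteq> 8/15" by blast
  then have "0 < M t q \<and> gen_ln (3*q - 8/5) (M t q) = gen_ln q t / 3"
  proof cases
    case 1
    define b where "b = 1 - 8/15 * ln t"
    have "ln t < 0" using t by simp
    then have b: "0 < b" by (simp add: b_def)
    have "M t q = b powr (-5/8)" using 1 by (simp add: M_def b_def)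
    moreover have "(b powr (-5/8)) powr (-8/5) = b" using b by (simp add: powr_powr)
    ultimately show ?thesis using 1 b by (simp add: gen_ln_def b_def field_simps)
  next
    case 2
    show ?thesis unfolding 2 by (simp add: M_def gen_ln_def)
  next
    case 3
    define b where "b = 8 / (15 * q) + (1 - 8 / (15 * q)) * t powr q"
    have b: "0 < b"
      unfolding b_def using t 3(1) by (rule M_base_pos)
    have M: "M t q = b powr (5 / (15 * q - 8))" using 3 by (simp add: M_def b_def)
    moreover have "5 / (15 * q - 8) * (3*q - 8/5) = 1" using 3 by (simp add: field_simps)
    ultimately have "M t q powr (3*q - 8/5) = b" using b by (simp add: powr_powr)
    then have "gen_ln (3*q - 8/5) (M t q) = (b - 1) / (3*q - 8/5)"
      using 3 by (simp add: gen_ln_def)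
    also have "\<dots> = gen_ln q t / 3"
      using 3 by (simp add: gen_ln_def b_def field_simps)
    finally show ?thesis using M b by simp
  qed
  then show "0 < M t q" and "gen_ln (3*q - 8/5) (M t q) = gen_ln q t / 3" by auto
qed

definition gap :: "real \<Rightarrow> real \<Rightarrow> real" where
  "gap q x = 3 * gen_ln (3*q - 8/5) (sin x / x) - gen_ln q (cos x)"

lemma M_less_sinc_iff:
  assumes "0 < x" "x < pi/2"
  shows "M (cos x) q < sin x / x \<longleftrightarrow> 0 < gap q x"
    and "sin x / x < M (cos x) q \<longleftrightarrow> gap q x < 0"
proof -
  have "0 < cos x" "cos x < 1"
    using assms cos_monotone_0_pi[of 0 x] by (auto intro: cos_gt_zero)
  note M = M_pos_gen_ln[OF this, of q]
  have sinc: "0 < sin x / x"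
    using assms sin_cos_pos_pi_half by simp
  have gap: "gap q x = 3 * (gen_ln (3*q - 8/5) (sin x / x) - gen_ln (3*q - 8/5) (M (cos x) q))"
    using M(2) by (simp add: gap_def)
  show "M (cos x) q < sin x / x \<longleftrightarrow> 0 < gap q x"
    using gen_ln_less_iff[OF M(1) sinc, of "3*q - 8/5"] unfolding gap by auto
  show "sin x / x < M (cos x) q \<longleftrightarrow> gap q x < 0"
    using gen_ln_less_iff[OF sinc M(1), of "3*q - 8/5"] unfolding gap by auto
qed

definition gap_deriv :: "real \<Rightarrow> real \<Rightarrow> real" where
  "gap_deriv q x = cos x powr (q - 1) * sin x
     - 3 * (sin x / x) powr (3*q - 13/5) * (sin x - x * cos x) / x\<^sup>2"

lemma has_real_derivative_gap:
  assumes x: "0 < x" "x < pi/2"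
  shows "(gap q has_real_derivative gap_deriv q x) (at x)"
proof -
  have "0 < sin x / x" "0 < cos x"
    using sin_cos_pos_pi_half[OF x] x by simp_all
  have "((\<lambda>x. sin x / x) has_real_derivative (cos x * x - sin x) / x\<^sup>2) (at x)"
    using x by (auto intro!: derivative_eq_intros simp: power2_eq_square)
  from DERIV_chain2[OF has_real_derivative_gen_ln[OF \<open>0 < sin x / x\<close>] this]
       DERIV_chain2[OF has_real_derivative_gen_ln[OF \<open>0 < cos x\<close>] DERIV_cos]
  have "(gap q has_real_derivative
      3 * ((sin x / x) powr (3*q - 8/5 - 1) * ((cos x * x - sin x) / x\<^sup>2))
      - cos x powr (q - 1) * - sin x) (at x)"
    unfolding gap_def[abs_def] by (intro DERIV_diff DERIV_cmult)
  moreover have "3 * ((sin x / x) powr (3*q - 8/5 - 1) * ((cos x * x - sin x) / x\<^sup>2))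
      - cos x powr (q - 1) * - sin x = gap_deriv q x"
    using x by (simp add: gap_deriv_def field_simps)
  ultimately show ?thesis
    by simp
qed

lemma gap_log_eq_ln_diff:
  assumes x: "0 < x" "x < pi/2"
  shows "gap_log q x = ln (cos x powr (q - 1) * sin x)
           - ln (3 * (sin x / x) powr (3*q - 13/5) * (sin x - x * cos x) / x\<^sup>2)"
proof -
  define S where "S = sin x - x * cos x"
  have "0 < sin x" "0 < cos x" "0 < S"
    using sin_cos_pos_pi_half[OF x] by (simp_all add: S_def)
  with x have "ln (cos x powr (q - 1) * sin x) - ln (3 * (sin x / x) powr (3*q - 13/5) * S / x\<^sup>2)
      = (q - 1) * ln (cos x) + ln (sin x) - (ln 3 + (3*q - 13/5) * (ln (sin x) - ln x) + ln S - 2 * ln x)"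
    by (simp add: ln_mult ln_div ln_powr ln_realpow)
  then show ?thesis
    by (simp add: gap_log_def S_def)
qed

lemma gap_deriv_sign:
  assumes x: "0 < x" "x < pi/2"
  shows "0 < gap_deriv q x \<longleftrightarrow> 0 < gap_log q x"
    and "gap_deriv q x < 0 \<longleftrightarrow> gap_log q x < 0"
proof -
  from sin_cos_pos_pi_half[OF x] have "0 < cos x powr (q - 1) * sin x"
    and "0 < 3 * (sin x / x) powr (3*q - 13/5) * (sin x - x * cos x) / x\<^sup>2"
    using x by simp_all
  then show "0 < gap_deriv q x \<longleftrightarrow> 0 < gap_log q x"
    and "gap_deriv q x < 0 \<longleftrightarrow> gap_log q x < 0"
    unfolding gap_deriv_def gap_log_eq_ln_diff[OF x] by (simp_all add: ln_less_cancel_iff)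
qed

lemma gap_tendsto_0: "(gap q \<longlongrightarrow> 0) (at_right 0)"
proof -
  have "((\<lambda>x. 3 * gen_ln (3*q - 8/5) (sin x / x) - gen_ln q (cos x))
          \<longlongrightarrow> 3 * gen_ln (3*q - 8/5) 1 - gen_ln q 1) (at_right 0)"
    by (intro tendsto_intros tendsto_gen_ln) (real_asymp | simp)+
  then show ?thesis
    by (simp add: gap_def[abs_def])
qed

lemma gap_tendsto_pi_half:
  assumes "0 < q"
  shows "(gap q \<longlongrightarrow> -3 * delta q) (at_left (pi/2))"
proof -
  have "((\<lambda>x. sin x / x) \<longlongrightarrow> sin (pi/2) / (pi/2)) (at_left (pi/2))"
    by (intro tendsto_divide tendsto_sin tendsto_ident_at) auto
  then have sinc: "((\<lambda>x. sin x / x) \<longlongrightarrow> 2/pi) (at_left (pi/2))"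
    by simp
  have "((\<lambda>x. cos x powr q) \<longlongrightarrow> 0) (at_left (pi/2))"
  proof (rule tendsto_zero_powrI[OF _ tendsto_const _ assms])
    show "((\<lambda>x. cos x) \<longlongrightarrow> 0) (at_left (pi/2))"
      using tendsto_cos[OF tendsto_ident_at[of "pi/2" "{..<pi/2}"]] by simp
    show "\<forall>\<^sub>F x in at_left (pi/2). 0 \<le> cos x"
      unfolding eventually_at_left_field by (intro exI[of _ 0]) (auto intro!: cos_ge_zero)
  qed
  then have "((\<lambda>x. (cos x powr q - 1) / q) \<longlongrightarrow> (0 - 1) / q) (at_left (pi/2))"
    by (intro tendsto_divide tendsto_diff tendsto_const) (use assms in auto)
  then have cos: "((\<lambda>x. gen_ln q (cos x)) \<longlongrightarrow> - 1 / q) (at_left (pi/2))"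
    using assms by (simp add: gen_ln_def)
  have "(gap q \<longlongrightarrow> 3 * gen_ln (3*q - 8/5) (2/pi) - - 1 / q) (at_left (pi/2))"
    unfolding gap_def[abs_def] by (intro tendsto_diff tendsto_mult tendsto_const tendsto_gen_ln sinc cos) auto
  moreover have "3 * gen_ln (3*q - 8/5) (2/pi) - - 1 / q = -3 * delta q"
    using assms by (cases "q = 8/15") (simp_all add: gen_ln_def delta_def ln_div field_simps)
  ultimately show ?thesis
    by simp
qed

lemma gap_pos:
  assumes "q \<le> 34/35" "0 < x" "x < pi/2"
  shows "0 < gap q x"
proof (rule DERIV_pos_imp_gt_right_limit[OF gap_tendsto_0 \<open>0 < x\<close>])
  fix t assume "0 < t" "t \<le> x"
  with assms show "(gap q has_real_derivative gap_deriv q t) (at t)"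
    by (intro has_real_derivative_gap) auto
next
  fix t assume "0 < t" "t < x"
  with assms show "0 < gap_deriv q t"
    by (simp add: gap_deriv_sign gap_log_pos)
qed

lemma gap_neg_if_gap_log_neg:
  assumes "0 < x" "x < pi/2" and neg: "\<And>t. 0 < t \<Longrightarrow> t < x \<Longrightarrow> gap_log q t < 0"
  shows "gap q x < 0"
proof (rule DERIV_neg_imp_lt_right_limit[OF gap_tendsto_0 \<open>0 < x\<close>])
  fix t assume "0 < t" "t \<le> x"
  with assms show "(gap q has_real_derivative gap_deriv q t) (at t)"
    by (intro has_real_derivative_gap) auto
next
  fix t assume "0 < t" "t < x"
  with assms neg show "gap_deriv q t < 0"
    by (simp add: gap_deriv_sign)
qed

lemma gap_neg_near_0:
  assumes "34/35 < q"
  obtains x where "0 < x" "x < pi/2" "gap q x < 0"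
proof -
  have "\<forall>\<^sub>F x in at_right 0. crit_ratio x < q"
    using order_tendstoD(2)[OF crit_ratio_tendsto assms] .
  then obtain d where "0 < d" and d: "\<And>x. 0 < x \<Longrightarrow> x < d \<Longrightarrow> crit_ratio x < q"
    unfolding eventually_at_right_field by auto
  define b where "b = min (d/2) 1"
  have b: "0 < b" "b < d" "b < pi/2"
    using \<open>0 < d\<close> pi_gt3 by (auto simp: b_def)
  have "gap q b < 0"
  proof (rule gap_neg_if_gap_log_neg[OF b(1,3)])
    fix t assume "0 < t" "t < b"
    with b d[of t] show "gap_log q t < 0"
      by (intro gap_log_neg) auto
  qed
  with b that show ?thesis by blast
qed

lemma gap_neg:
  assumes "0 < q" "0 \<le> delta q" "0 < x" "x < pi/2"
  shows "gap q x < 0"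
proof (cases "\<exists>y. 0 < y \<and> y < x \<and> 0 \<le> gap_log q y")
  case True
  then obtain y where y: "0 < y" "y < x" "0 \<le> gap_log q y" by blast
  have "gap q x < -3 * delta q"
  proof (rule DERIV_pos_imp_lt_left_limit[OF gap_tendsto_pi_half[OF \<open>0 < q\<close>] \<open>x < pi/2\<close>])
    fix t assume "x \<le> t" "t < pi/2"
    with assms show "(gap q has_real_derivative gap_deriv q t) (at t)"
      by (intro has_real_derivative_gap) auto
  next
    fix t assume "x < t" "t < pi/2"
    with y have "0 < t" "0 < gap_log q t"
      by (auto intro: gap_log_pos_after)
    with \<open>t < pi/2\<close> show "0 < gap_deriv q t"
      by (simp add: gap_deriv_sign)
  qed
  with assms show ?thesis by simp
next
  case False
  then show ?thesis
    using assms by (intro gap_neg_if_gap_log_neg) force+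
qed

lemma gap_pos_near_pi_half:
  assumes "0 < q" "delta q < 0"
  obtains x where "0 < x" "x < pi/2" "0 < gap q x"
proof -
  have "\<forall>\<^sub>F x in at_left (pi/2). 0 < gap q x"
    using order_tendstoD(1)[OF gap_tendsto_pi_half] assms by simp
  then obtain b where "b < pi/2" and b: "\<And>x. b < x \<Longrightarrow> x < pi/2 \<Longrightarrow> 0 < gap q x"
    unfolding eventually_at_left_field by auto
  define x where "x = (max b 0 + pi/2) / 2"
  have "0 < x" "x < pi/2" "b < x"
    using \<open>b < pi/2\<close> pi_gt_zero by (auto simp: x_def max_def)
  with b that show ?thesis by blast
qed

section \<open>The sign of delta\<close>

lemma ln_pi_half_bounds: "0 < ln (pi/2)" "ln (pi/2) < 5/8"
proof -
  show "0 < ln (pi/2)" using pi_gt3 by simp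
  have "pi/2 < 1 + 5/8 + (5/8)\<^sup>2 / 2"
    using pi_approx by (simp add: power2_eq_square)
  also have "\<dots> \<le> exp (5/8)"
    by (rule exp_lower_Taylor_quadratic) simp
  finally have "ln (pi/2) < ln (exp (5/8))"
    using pi_gt_zero by (subst ln_less_cancel_iff) auto
  then show "ln (pi/2) < 5/8"
    by simp
qed

text \<open>For \<open>q > 0\<close> the numerator of \<open>delta q\<close> is \<open>exp (ln (8/15) - ln q) - exp (- (3 q - 8/5) ln (pi/2))\<close>
  (over \<open>3 q - 8/5\<close>), so its sign is that of the difference of the exponents, \<open>delta_aux q\<close>.\<close>

definition delta_aux :: "real \<Rightarrow> real" where
  "delta_aux q = ln (8/15) - ln q + (3*q - 8/5) * ln (pi/2)"

lemma sgn_delta: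
  assumes "0 < q" "q \<noteq> 8/15"
  shows "sgn (delta q) = sgn (delta_aux q) * sgn (q - 8/15)"
proof -
  have "8 / (15 * q) = exp (ln (8/15) - ln q)"
    using assms by (simp add: exp_diff)
  moreover have "(2/pi) powr (3*q - 8/5) = exp (- (3*q - 8/5) * ln (pi/2))"
    using ln_inverse[of "pi/2"] by (simp add: powr_def algebra_simps)
  moreover have "1 / (3*q) = (1 - 8 / (15 * q)) / (3*q - 8/5)"
    using assms by (simp add: field_simps)
  ultimately have "delta q = (exp (ln (8/15) - ln q) - exp (- (3*q - 8/5) * ln (pi/2))) / (3*q - 8/5)"
    using assms by (simp add: delta_def diff_divide_distrib)
  then have "sgn (delta q)
      = sgn (exp (ln (8/15) - ln q) - exp (- (3*q - 8/5) * ln (pi/2))) / sgn (3*q - 8/5)"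
    by (simp add: sgn_divide)
  also have "sgn (exp (ln (8/15) - ln q) - exp (- (3*q - 8/5) * ln (pi/2))) = sgn (delta_aux q)"
  proof -
    have "sgn (exp (ln (8/15) - ln q) - exp (- (3*q - 8/5) * ln (pi/2)))
        = sgn (ln (8/15) - ln q - - (3*q - 8/5) * ln (pi/2))"
      unfolding sgn_real_def by auto
    also have "ln (8/15) - ln q - - (3*q - 8/5) * ln (pi/2) = delta_aux q"
      by (simp add: delta_aux_def algebra_simps)
    finally show ?thesis .
  qed
  also have "sgn (3*q - 8/5) = sgn (q - 8/15)"
    by (simp add: sgn_real_def)
  also have "sgn (delta_aux q) / sgn (q - 8/15) = sgn (delta_aux q) * sgn (q - 8/15)"
    using assms by (cases "q < 8/15") (simp_all add: sgn_real_def)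
  finally show ?thesis .
qed

lemma has_real_derivative_delta_aux:
  assumes "0 < q"
  shows "(delta_aux has_real_derivative 3 * ln (pi/2) - 1 / q) (at q)"
  unfolding delta_aux_def[abs_def] using assms
  by (auto intro!: derivative_eq_intros)

definition delta_aux_argmin :: real where
  "delta_aux_argmin = 1 / (3 * ln (pi/2))"

lemma delta_aux_argmin_gt: "8/15 < delta_aux_argmin"
  using ln_pi_half_bounds by (simp add: delta_aux_argmin_def field_simps)

lemma delta_aux_decreasing:
  assumes "0 < a" "a < b" "b \<le> delta_aux_argmin"
  shows "delta_aux b < delta_aux a"
proof (rule DERIV_neg_on_open_imp_greater[OF \<open>a < b\<close>])
  fix t assume "a \<le> t" "t \<le> b"
  with assms show "(delta_aux has_real_derivative 3 * ln (pi/2) - 1 / t) (at t)"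
    by (intro has_real_derivative_delta_aux) auto
next
  fix t assume "a < t" "t < b"
  with assms have "t < 1 / (3 * ln (pi/2))"
    by (simp add: delta_aux_argmin_def)
  with assms \<open>a < t\<close> ln_pi_half_bounds show "3 * ln (pi/2) - 1 / t < 0"
    by (simp add: field_simps)
qed

lemma delta_aux_increasing:
  assumes "delta_aux_argmin \<le> a" "a < b"
  shows "delta_aux a < delta_aux b"
proof (rule DERIV_pos_on_open_imp_less[OF \<open>a < b\<close>])
  fix t assume "a \<le> t" "t \<le> b"
  with assms delta_aux_argmin_gt show "(delta_aux has_real_derivative 3 * ln (pi/2) - 1 / t) (at t)"
    by (intro has_real_derivative_delta_aux) auto
next
  fix t assume "a < t" "t < b"
  with assms have "1 / (3 * ln (pi/2)) < t"
    by (simp add: delta_aux_argmin_def)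
  moreover have "0 < t"
    using assms delta_aux_argmin_gt \<open>a < t\<close> by simp
  ultimately show "0 < 3 * ln (pi/2) - 1 / t"
    using ln_pi_half_bounds by (simp add: field_simps)
qed

lemma delta_aux_2_pos: "0 < delta_aux 2"
proof -
  have "ln (8/15) - ln 2 = ln ((8/15) / (2::real))"
    by (rule ln_divide_pos[symmetric]) auto
  also have "\<dots> = - ln (15/4)"
    by (simp add: ln_inverse[symmetric])
  finally have "delta_aux 2 = 22/5 * ln (pi/2) - ln (15/4)"
    by (simp add: delta_aux_def)
  moreover have "ln (15/4) < ln ((3/2::real) ^ 4)"
    by (simp add: power_divide)
  moreover have "ln ((3/2::real) ^ 4) = 4 * ln (3/2)"
    using ln_realpow[of "3/2" 4] by simp
  moreover have "ln (3/2) < ln (pi/2)"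
    using pi_gt3 by simp
  moreover have "0 < ln (3/2::real)"
    by simp
  ultimately show ?thesis
    by linarith
qed

lemma delta_aux_sign:
  obtains q0 where "8/15 < q0" "\<And>q. 0 < q \<Longrightarrow> sgn (delta_aux q) = sgn (q - 8/15) * sgn (q - q0)"
proof -
  let ?m = delta_aux_argmin
  note dec = delta_aux_decreasing and inc = delta_aux_increasing and m = delta_aux_argmin_gt
  have zero: "delta_aux (8/15) = 0"
    by (simp add: delta_aux_def)
  have "?m < 2"
    using dec[of "8/15" 2] zero delta_aux_2_pos by (cases "?m < 2") auto
  have "delta_aux ?m < 0"
    using dec[of "8/15" ?m] m zero by simp
  have "continuous_on {?m..2} delta_aux"
  proof (rule DERIV_atLeastAtMost_imp_continuous_on)
    fix t assume "?m \<le> t"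
    with m show "\<exists>d. (delta_aux has_real_derivative d) (at t)"
      using has_real_derivative_delta_aux[of t] by auto
  qed
  then obtain q0 where q0: "?m \<le> q0" "q0 \<le> 2" "delta_aux q0 = 0"
    using IVT'[of delta_aux ?m 0 2] \<open>delta_aux ?m < 0\<close> delta_aux_2_pos \<open>?m < 2\<close> by auto
  with \<open>delta_aux ?m < 0\<close> have "?m < q0"
    by (cases "q0 = ?m") auto
  show thesis
  proof (rule that)
    show "8/15 < q0"
      using m \<open>?m < q0\<close> by simp
    fix q :: real assume "0 < q"
    consider "q < 8/15" | "q = 8/15" | "8/15 < q" "q \<le> ?m" | "?m < q" "q < q0" | "q = q0" | "q0 < q"
      by linarith
    then show "sgn (delta_aux q) = sgn (q - 8/15) * sgn (q - q0)"
    proof cases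
      case 1
      with \<open>0 < q\<close> m \<open>?m < q0\<close> show ?thesis using dec[of q "8/15"] zero by simp
    next
      case 2
      show ?thesis unfolding 2 zero by simp
    next
      case 3
      with m \<open>?m < q0\<close> show ?thesis using dec[of "8/15" q] zero by simp
    next
      case 4
      with m show ?thesis using inc[of q q0] q0 by simp
    next
      case 5
      show ?thesis unfolding 5 q0(3) by simp
    next
      case 6
      with m \<open>?m < q0\<close> show ?thesis using inc[of q0 q] q0 by simp
    qed
  qed
qed

lemma delta_sign:
  obtains q0 where "0 < q0" "\<And>q. 0 < q \<Longrightarrow> sgn (delta q) = sgn (q - q0)"
proof -
  obtain q0 where q0: "8/15 < q0" "\<And>q. 0 < q \<Longrightarrow> sgn (delta_aux q) = sgn (q - 8/15) * sgn (q - q0)"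
    by (metis delta_aux_sign)
  have sgn_eq: "sgn (delta q) = sgn (q - q0)" if "0 < q" for q
  proof (cases "q = 8/15")
    case True
    with ln_pi_half_bounds q0(1) show ?thesis
      by (simp add: delta_def)
  next
    case False
    with sgn_delta[OF that False] q0(2)[OF that] show ?thesis
      by (simp add: sgn_real_def)
  qed
  show thesis
    by (rule that[OF _ sgn_eq]) (use q0(1) in simp_all)
qed

lemma delta_root:
  obtains q0 where "0 < q0" "delta q0 = 0" "\<forall>q>0. delta q = 0 \<longrightarrow> q = q0"
    "\<forall>q. 0 < q \<and> 0 \<le> delta q \<longleftrightarrow> q0 \<le> q"
proof -
  obtain q0 where "0 < q0" and q0: "\<And>q. 0 < q \<Longrightarrow> sgn (delta q) = sgn (q - q0)"
    by (metis delta_sign)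
  have "delta q0 = 0"
    using q0[OF \<open>0 < q0\<close>] by (simp add: sgn_eq_0_iff)
  moreover have "\<forall>q>0. delta q = 0 \<longrightarrow> q = q0"
  proof (intro allI impI)
    fix q :: real assume "0 < q" "delta q = 0"
    then show "q = q0" using q0[OF \<open>0 < q\<close>] by (simp add: sgn_eq_0_iff)
  qed
  moreover have "\<forall>q. 0 < q \<and> 0 \<le> delta q \<longleftrightarrow> q0 \<le> q"
  proof
    fix q :: real
    show "0 < q \<and> 0 \<le> delta q \<longleftrightarrow> q0 \<le> q"
    proof (cases "0 < q")
      case True
      have "0 \<le> delta q \<longleftrightarrow> 0 \<le> sgn (q - q0)"
        unfolding q0[OF True, symmetric] by (simp only: zero_le_sgn_iff)
      with True show ?thesis
        by (simp add: zero_le_sgn_iff)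
    qed (use \<open>0 < q0\<close> in auto)
  qed
  ultimately show thesis
    using that \<open>0 < q0\<close> by blast
qed

lemma M_cos_less_sinc_iff: "(\<forall>x. 0 < x \<and> x < pi/2 \<longrightarrow> M (cos x) q < sin x / x) \<longleftrightarrow> q \<le> 34/35"
proof
  assume above: "\<forall>x. 0 < x \<and> x < pi/2 \<longrightarrow> M (cos x) q < sin x / x"
  show "q \<le> 34/35"
  proof (rule ccontr)
    assume "\<not> q \<le> 34/35"
    then obtain x where "0 < x" "x < pi/2" "gap q x < 0"
      using gap_neg_near_0[of q] by force
    with above M_less_sinc_iff(1)[of x q] show False
      by auto
  qed
next
  assume "q \<le> 34/35"
  then show "\<forall>x. 0 < x \<and> x < pi/2 \<longrightarrow> M (cos x) q < sin x / x"
    by (simp add: M_less_sinc_iff(1) gap_pos)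
qed

lemma sinc_less_M_cos_iff:
  "(\<forall>x. 0 < x \<and> x < pi/2 \<longrightarrow> sin x / x < M (cos x) q) \<longleftrightarrow> 0 < q \<and> 0 \<le> delta q"
proof
  assume below: "\<forall>x. 0 < x \<and> x < pi/2 \<longrightarrow> sin x / x < M (cos x) q"
  have "34/35 < q"
  proof (rule ccontr)
    have one: "0 < (1::real)" "1 < pi/2"
      using pi_gt3 by auto
    assume "\<not> 34/35 < q"
    then have "0 < gap q 1"
      using gap_pos one by simp
    moreover have "sin 1 / 1 < M (cos 1) q"
      using below one by blast
    ultimately show False
      using M_less_sinc_iff(2)[OF one, of q] by simp
  qed
  moreover have "0 \<le> delta q"
  proof (rule ccontr)
    assume "\<not> 0 \<le> delta q"
    with \<open>34/35 < q\<close> obtain x where "0 < x" "x < pi/2" "0 < gap q x"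
      using gap_pos_near_pi_half[of q] by force
    with below M_less_sinc_iff(2)[of x q] show False
      by auto
  qed
  ultimately show "0 < q \<and> 0 \<le> delta q"
    by simp
next
  assume "0 < q \<and> 0 \<le> delta q"
  then show "\<forall>x. 0 < x \<and> x < pi/2 \<longrightarrow> sin x / x < M (cos x) q"
    by (simp add: M_less_sinc_iff(2) gap_neg)
qed

theorem theorem8:
  shows "(\<forall>q::real. (\<forall>x. 0 < x \<and> x < pi/2 \<longrightarrow> sin x / x > M (cos x) q) \<longleftrightarrow> q \<le> 34/35)
    \<and> (\<exists>q0::real. q0 > 0 \<and> delta q0 = 0 \<and> (\<forall>q>0. delta q = 0 \<longrightarrow> q = q0)
         \<and> (\<forall>q::real. (\<forall>x. 0 < x \<and> x < pi/2 \<longrightarrow> sin x / x < M (cos x) q) \<longleftrightarrow> q \<ge> q0))"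
proof -
  obtain q0 where "0 < q0" "delta q0 = 0" "\<forall>q>0. delta q = 0 \<longrightarrow> q = q0"
    and "\<forall>q. 0 < q \<and> 0 \<le> delta q \<longleftrightarrow> q0 \<le> q"
    by (rule delta_root)
  then show ?thesis
    unfolding M_cos_less_sinc_iff sinc_less_M_cos_iff by blast
qed

end
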